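(* Let $x_0\in\mathbb{R}\cup\{+\infty\}$, $T<x_0$, $I:=[T,x_0)$, and let $\phi_1,\phi_2\in C^1(I)$ with $\phi_2(x)=o(\phi_1(x))$ as $x\to x_0$, $\phi_1(x)\neq0$, $\phi_2(x)\neq0$ and $W(x):=W(\phi_1,\phi_2;x)\neq0$ for all $x\in I$. Put $\Phi(x):=\phi_2(T)\phi_1(x)-\phi_1(T)\phi_2(x)$. Then, as $x\to x_0$, $$\Phi(x)\sim\phi_2(T)\phi_1(x),\qquad W(x)\Phi(x)^{-2}\sim\frac{1}{\phi_2(T)^2}\Big(\frac{\phi_2(x)}{\phi_1(x)}\Big)',\qquad \int_x^{x_0}W(t)\Phi(t)^{-2}\,dt\sim-\frac{1}{\phi_2(T)^2}\,\frac{\phi_2(x)}{\phi_1(x)},$$ and for every $x\in(T,x_0)$ the improper integral converges with $$\int_x^{x_0}W(t)\Phi(t)^{-2}\,dt=-\frac{1}{\phi_2(T)}\,\frac{\phi_2(x)}{\Phi(x)}.$$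
   Context: $W(g,h;x):=g(x)h'(x)-g'(x)h(x)$. Limits as $x\to x_0$ are for $x<x_0$. *)

theory Defs
  imports "HOL-Analysis.Analysis" "HOL-Library.Landau_Symbols"
begin

definition approach :: "ereal \<Rightarrow> real filter" where
  "approach x0 = (if x0 = \<infinity> then at_top else at_left (real_of_ereal x0))"

definition wronskian :: "(real \<Rightarrow> real) \<Rightarrow> (real \<Rightarrow> real) \<Rightarrow> (real \<Rightarrow> real) \<Rightarrow> (real \<Rightarrow> real) \<Rightarrow> real \<Rightarrow> real" where
  "wronskian g g' h h' x = g x * h' x - g' x * h x"

definition improper_integral_converges_to :: "(real \<Rightarrow> real) \<Rightarrow> real \<Rightarrow> ereal \<Rightarrow> real \<Rightarrow> bool" where
  "improper_integral_converges_to f x x0 L \<longleftrightarrow>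
     (\<forall>y. x \<le> y \<and> ereal y < x0 \<longrightarrow> f integrable_on {x..y}) \<and>
     ((\<lambda>y. integral {x..y} f) \<longlongrightarrow> L) (approach x0)"

definition improper_integral :: "(real \<Rightarrow> real) \<Rightarrow> real \<Rightarrow> ereal \<Rightarrow> real" where
  "improper_integral f x x0 = Lim (approach x0) (\<lambda>y. integral {x..y} f)"

end

theory Submission
  imports Defs
begin

text \<open>Since \<open>W(\<Phi>, \<phi>2) = \<phi>2(T) W(\<phi>1, \<phi>2)\<close>, the integrand \<open>W/\<Phi>\<^sup>2\<close> has the explicit
  primitive \<open>\<phi>2/(\<phi>2(T) \<Phi>)\<close> on \<open>(T, x0)\<close>; \<open>\<Phi>\<close> has no zero there because \<open>\<Phi>(x) = 0\<close> would
  mean \<open>(\<phi>2/\<phi>1)(x) = (\<phi>2/\<phi>1)(T)\<close>, while \<open>\<phi>2/\<phi>1\<close> is injective, its derivative \<open>W/\<phi>1\<^sup>2\<close>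
  never vanishing. As \<open>\<phi>2 = o(\<phi>1)\<close>, we have \<open>\<Phi> \<sim> \<phi>2(T) \<phi>1\<close>, so the primitive tends to \<open>0\<close>
  at \<open>x0\<close>; this gives the value of the improper integral, and all asymptotic equivalences
  follow from \<open>\<Phi> \<sim> \<phi>2(T) \<phi>1\<close>.\<close>

lemma approach_neq_bot: "approach x0 \<noteq> bot"
  by (simp add: approach_def)

lemma eventually_approach_between:
  assumes "ereal T < x0"
  shows "\<forall>\<^sub>F x in approach x0. T < x \<and> ereal x < x0"
proof (cases x0)
  case (real r)
  then have "\<forall>\<^sub>F x in at_left r. x \<in> {T<..<r}"
    using assms by (intro eventually_at_left_real) simp
  then show ?thesis
    using real by (simp add: approach_def)
qed (use assms in \<open>auto simp: approach_def eventually_gt_at_top\<close>)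

lemma at_within_ereal_interval:
  assumes "T < x" "ereal x < x0"
  shows "at x within {t. T \<le> t \<and> ereal t < x0} = at x"
proof -
  obtain b where b: "x < b" "ereal b < x0"
    using ereal_dense2[OF assms(2)] by auto
  have "{T<..<b} \<subseteq> {t. T \<le> t \<and> ereal t < x0}"
    using b(2) by (auto intro: order.strict_trans[of _ "ereal b"])
  then show ?thesis
    using assms(1) b(1) by (intro at_within_open_subset[of _ "{T<..<b}"]) auto
qed

lemma is_interval_ereal_interval: "is_interval {t. T \<le> t \<and> ereal t < x0}"
  unfolding is_interval_1 by (auto intro: le_less_trans[of _ "ereal _"])

lemma improper_integral_eqI:
  "improper_integral_converges_to f x x0 L \<Longrightarrow> improper_integral f x x0 = L"
  unfolding improper_integral_converges_to_def improper_integral_def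
  by (simp add: tendsto_Lim approach_neq_bot)

lemma improper_integral_converges_to_antiderivative:
  assumes F': "\<And>t. x \<le> t \<Longrightarrow> ereal t < x0 \<Longrightarrow>
      (F has_real_derivative f t) (at t within {t. x \<le> t \<and> ereal t < x0})"
    and F_lim: "(F \<longlongrightarrow> L) (approach x0)"
    and "ereal x < x0"
  shows "improper_integral_converges_to f x x0 (L - F x)"
proof -
  have FTC: "(f has_integral (F y - F x)) {x..y}" if "x \<le> y" "ereal y < x0" for y
  proof (rule fundamental_theorem_of_calculus[OF \<open>x \<le> y\<close>])
    fix t assume t: "t \<in> {x..y}"
    have sub: "{x..y} \<subseteq> {t. x \<le> t \<and> ereal t < x0}"
      using that by (auto intro: le_less_trans[of _ "ereal y"])
    with t have "(F has_real_derivative f t) (at t within {x..y})"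
      by (intro has_field_derivative_subset[OF F' sub]) auto
    then show "(F has_vector_derivative f t) (at t within {x..y})"
      by (simp add: has_real_derivative_iff_has_vector_derivative)
  qed
  have "((\<lambda>y. F y - F x) \<longlongrightarrow> L - F x) (approach x0)"
    by (intro tendsto_intros F_lim)
  moreover have "\<forall>\<^sub>F y in approach x0. F y - F x = integral {x..y} f"
    using eventually_approach_between[OF \<open>ereal x < x0\<close>]
    by eventually_elim (auto intro!: integral_unique[symmetric] FTC)
  ultimately have "((\<lambda>y. integral {x..y} f) \<longlongrightarrow> L - F x) (approach x0)"
    by (rule Lim_transform_eventually)
  then show ?thesis
    unfolding improper_integral_converges_to_def using FTC by blast
qed

lemma has_real_derivative_divide_wronskian:
  assumes "(f has_real_derivative f' x) (at x within S)"
    and "(g has_real_derivative g' x) (at x within S)"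
    and "g x \<noteq> 0"
  shows "((\<lambda>t. f t / g t) has_real_derivative wronskian g g' f f' x / (g x)\<^sup>2) (at x within S)"
proof -
  have "(f' x * g x - f x * g' x) / (g x * g x) = wronskian g g' f f' x / (g x)\<^sup>2"
    by (simp add: wronskian_def power2_eq_square mult.commute)
  then show ?thesis
    using DERIV_divide[OF assms] by simp
qed

lemma wronskian_lincomb_left:
  "wronskian (\<lambda>t. c * f t - a * g t) (\<lambda>t. c * f' t - a * g' t) g g' x = c * wronskian f f' g g' x"
  by (simp add: wronskian_def algebra_simps)

lemma inj_on_if_has_real_derivative_nonzero:
  assumes "is_interval S"
    and f': "\<And>x. x \<in> S \<Longrightarrow> (f has_real_derivative f' x) (at x within S)"
    and nz: "\<And>x. x \<in> S \<Longrightarrow> f' x \<noteq> 0"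
  shows "inj_on f S"
proof (rule linorder_inj_onI')
  fix a b assume ab: "a \<in> S" "b \<in> S" "a < b"
  then have sub: "{a..b} \<subseteq> S"
    using \<open>is_interval S\<close> by (meson atLeastAtMost_iff is_interval_1 subsetI)
  have f'_ab: "(f has_derivative (*) (f' x)) (at x within {a..b})" if "a \<le> x" "x \<le> b" for x
    using has_field_derivative_subset[OF f'[of x] sub] sub that
    by (auto simp: has_field_derivative_def)
  obtain z where z: "z \<in> {a<..<b}" "f b - f a = f' z * (b - a)"
    using mvt_simple[OF \<open>a < b\<close> f'_ab] by auto
  have "f' z \<noteq> 0"
    using nz sub z(1) by (meson atLeastAtMost_iff greaterThanLessThan_iff less_imp_le subsetD)
  with z(2) \<open>a < b\<close> show "f a \<noteq> f b"
    by auto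
qed

locale wronskian_pair =
  fixes x0 :: ereal and T :: real and I :: "real set"
    and \<phi>1 \<phi>1' \<phi>2 \<phi>2' :: "real \<Rightarrow> real"
  assumes I_eq: "I = {x. T \<le> x \<and> ereal x < x0}"
    and T_less: "ereal T < x0"
    and \<phi>1_deriv: "\<And>x. x \<in> I \<Longrightarrow> (\<phi>1 has_real_derivative \<phi>1' x) (at x within I)"
    and \<phi>2_deriv: "\<And>x. x \<in> I \<Longrightarrow> (\<phi>2 has_real_derivative \<phi>2' x) (at x within I)"
    and \<phi>2_small: "\<phi>2 \<in> o[approach x0](\<phi>1)"
    and \<phi>1_nonzero: "\<And>x. x \<in> I \<Longrightarrow> \<phi>1 x \<noteq> 0"
    and \<phi>2_T_nonzero: "\<phi>2 T \<noteq> 0"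
    and W_nonzero: "\<And>x. x \<in> I \<Longrightarrow> wronskian \<phi>1 \<phi>1' \<phi>2 \<phi>2' x \<noteq> 0"
begin

definition W :: "real \<Rightarrow> real" where
  "W = wronskian \<phi>1 \<phi>1' \<phi>2 \<phi>2'"

definition \<Phi> :: "real \<Rightarrow> real" where
  "\<Phi> = (\<lambda>x. \<phi>2 T * \<phi>1 x - \<phi>1 T * \<phi>2 x)"

lemma T_in_I: "T \<in> I"
  using T_less by (simp add: I_eq)

lemma eventually_in_I: "\<forall>\<^sub>F x in approach x0. x \<in> I \<and> x \<noteq> T"
  using eventually_approach_between[OF T_less] by eventually_elim (auto simp: I_eq)

lemma at_within_I: "x \<in> I \<Longrightarrow> x \<noteq> T \<Longrightarrow> at x within I = at x"
  by (simp add: I_eq at_within_ereal_interval)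

lemma quotient_has_derivative:
  "x \<in> I \<Longrightarrow> ((\<lambda>t. \<phi>2 t / \<phi>1 t) has_real_derivative W x / (\<phi>1 x)\<^sup>2) (at x within I)"
  unfolding W_def
  by (intro has_real_derivative_divide_wronskian \<phi>1_deriv \<phi>2_deriv \<phi>1_nonzero)

lemma \<Phi>_nonzero:
  assumes "x \<in> I" "x \<noteq> T"
  shows "\<Phi> x \<noteq> 0"
proof
  assume "\<Phi> x = 0"
  then have "\<phi>2 x / \<phi>1 x = \<phi>2 T / \<phi>1 T"
    using \<phi>1_nonzero[OF assms(1)] \<phi>1_nonzero[OF T_in_I] by (simp add: \<Phi>_def field_simps)
  moreover have "inj_on (\<lambda>t. \<phi>2 t / \<phi>1 t) I"
    by (rule inj_on_if_has_real_derivative_nonzero[OF _ quotient_has_derivative])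
       (use W_nonzero \<phi>1_nonzero in \<open>auto simp: I_eq is_interval_ereal_interval W_def\<close>)
  ultimately show False
    using assms T_in_I by (auto dest: inj_onD)
qed

lemma \<Phi>_asymp_equiv: "\<Phi> \<sim>[approach x0] (\<lambda>x. \<phi>2 T * \<phi>1 x)"
proof (rule smallo_imp_asymp_equiv)
  have "(\<lambda>x. - \<phi>1 T * \<phi>2 x) \<in> o[approach x0](\<lambda>x. \<phi>2 T * \<phi>1 x)"
    using \<phi>2_small \<phi>1_nonzero[OF T_in_I] \<phi>2_T_nonzero by simp
  then show "(\<lambda>x. \<Phi> x - \<phi>2 T * \<phi>1 x) \<in> o[approach x0](\<lambda>x. \<phi>2 T * \<phi>1 x)"
    by (simp add: \<Phi>_def)
qed

lemma W_div_\<Phi>_asymp_equiv: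
  "(\<lambda>x. W x / (\<Phi> x)\<^sup>2) \<sim>[approach x0]
     (\<lambda>x. 1 / (\<phi>2 T)\<^sup>2 * deriv (\<lambda>t. \<phi>2 t / \<phi>1 t) x)"
proof -
  have equiv: "(\<lambda>x. W x / (\<Phi> x)\<^sup>2) \<sim>[approach x0] (\<lambda>x. W x / (\<phi>2 T * \<phi>1 x)\<^sup>2)"
    by (intro asymp_equiv_divide asymp_equiv_refl asymp_equiv_power \<Phi>_asymp_equiv)
  have eq: "\<forall>\<^sub>F x in approach x0.
      W x / (\<phi>2 T * \<phi>1 x)\<^sup>2 = 1 / (\<phi>2 T)\<^sup>2 * deriv (\<lambda>t. \<phi>2 t / \<phi>1 t) x"
    using eventually_in_I
  proof eventually_elim
    case (elim x)
    then have "((\<lambda>t. \<phi>2 t / \<phi>1 t) has_real_derivative W x / (\<phi>1 x)\<^sup>2) (at x)"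
      using quotient_has_derivative[of x] at_within_I[of x] by simp
    then have "deriv (\<lambda>t. \<phi>2 t / \<phi>1 t) x = W x / (\<phi>1 x)\<^sup>2"
      by (rule DERIV_imp_deriv)
    then show ?case
      by (simp add: power_mult_distrib)
  qed
  show ?thesis
    by (rule asymp_equiv_transfer[OF equiv _ eq]) simp
qed

lemma primitive_has_derivative:
  assumes "x \<in> I" "x \<noteq> T"
  shows "((\<lambda>t. \<phi>2 t / \<Phi> t / \<phi>2 T) has_real_derivative W x / (\<Phi> x)\<^sup>2) (at x within I)"
proof -
  define \<Phi>' where "\<Phi>' = (\<lambda>t. \<phi>2 T * \<phi>1' t - \<phi>1 T * \<phi>2' t)"
  have "(\<Phi> has_real_derivative \<Phi>' x) (at x within I)"
    unfolding \<Phi>_def \<Phi>'_def using assms by (intro DERIV_diff DERIV_cmult \<phi>1_deriv \<phi>2_deriv)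
  from has_real_derivative_divide_wronskian[where f'=\<phi>2' and g'=\<Phi>',
      OF \<phi>2_deriv[OF assms(1)] this \<Phi>_nonzero[OF assms]]
  have "((\<lambda>t. \<phi>2 t / \<Phi> t) has_real_derivative \<phi>2 T * W x / (\<Phi> x)\<^sup>2) (at x within I)"
    by (simp add: \<Phi>_def \<Phi>'_def W_def wronskian_lincomb_left)
  from DERIV_cdivide[OF this, of "\<phi>2 T"] show ?thesis
    using \<phi>2_T_nonzero by simp
qed

lemma primitive_tendsto_zero: "((\<lambda>x. \<phi>2 x / \<Phi> x / \<phi>2 T) \<longlongrightarrow> 0) (approach x0)"
proof -
  let ?q = "\<lambda>x. \<phi>2 x / \<phi>1 x"
  have "((\<lambda>x. ?q x / (\<phi>2 T - \<phi>1 T * ?q x) / \<phi>2 T) \<longlongrightarrow> 0 / (\<phi>2 T - \<phi>1 T * 0) / \<phi>2 T)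
      (approach x0)"
    using \<phi>2_T_nonzero by (intro tendsto_intros smalloD_tendsto[OF \<phi>2_small]) auto
  moreover have "\<forall>\<^sub>F x in approach x0. ?q x / (\<phi>2 T - \<phi>1 T * ?q x) / \<phi>2 T = \<phi>2 x / \<Phi> x / \<phi>2 T"
    using eventually_in_I by eventually_elim (simp add: \<phi>1_nonzero \<Phi>_def field_simps)
  ultimately show ?thesis
    by (simp add: Lim_transform_eventually)
qed

lemma improper_integral_converges:
  assumes "T < x" "ereal x < x0"
  shows "improper_integral_converges_to (\<lambda>t. W t / (\<Phi> t)\<^sup>2) x x0
           (- (1 / \<phi>2 T) * (\<phi>2 x / \<Phi> x))"
proof -
  have "{t. x \<le> t \<and> ereal t < x0} \<subseteq> I"
    using assms(1) by (auto simp: I_eq)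
  then have "improper_integral_converges_to (\<lambda>t. W t / (\<Phi> t)\<^sup>2) x x0 (0 - \<phi>2 x / \<Phi> x / \<phi>2 T)"
    using assms
    by (intro improper_integral_converges_to_antiderivative primitive_tendsto_zero
        has_field_derivative_subset[OF primitive_has_derivative]) auto
  then show ?thesis
    by (simp add: ac_simps)
qed

lemma improper_integral_asymp_equiv:
  "(\<lambda>x. improper_integral (\<lambda>t. W t / (\<Phi> t)\<^sup>2) x x0) \<sim>[approach x0]
     (\<lambda>x. - (1 / (\<phi>2 T)\<^sup>2) * (\<phi>2 x / \<phi>1 x))"
proof -
  have equiv: "(\<lambda>x. - (1 / \<phi>2 T) * (\<phi>2 x / \<Phi> x)) \<sim>[approach x0]
      (\<lambda>x. - (1 / \<phi>2 T) * (\<phi>2 x / (\<phi>2 T * \<phi>1 x)))"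
    by (intro asymp_equiv_mult asymp_equiv_divide asymp_equiv_refl \<Phi>_asymp_equiv)
  have integral_eq: "\<forall>\<^sub>F x in approach x0.
      - (1 / \<phi>2 T) * (\<phi>2 x / \<Phi> x) = improper_integral (\<lambda>t. W t / (\<Phi> t)\<^sup>2) x x0"
    using eventually_approach_between[OF T_less]
  proof (rule eventually_mono)
    fix x assume "T < x \<and> ereal x < x0"
    then show "- (1 / \<phi>2 T) * (\<phi>2 x / \<Phi> x) = improper_integral (\<lambda>t. W t / (\<Phi> t)\<^sup>2) x x0"
      by (intro improper_integral_eqI[symmetric] improper_integral_converges) auto
  qed
  have "- (1 / \<phi>2 T) * (\<phi>2 x / (\<phi>2 T * \<phi>1 x)) = - (1 / (\<phi>2 T)\<^sup>2) * (\<phi>2 x / \<phi>1 x)" for x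
    by (simp add: power2_eq_square)
  then show ?thesis
    by (intro asymp_equiv_transfer[OF equiv integral_eq] always_eventually) simp
qed

end

theorem lemma7p3:
  fixes x0 :: ereal and T :: real
    and \<phi>1 \<phi>2 \<phi>1' \<phi>2' :: "real \<Rightarrow> real"
  defines "I \<equiv> {x. T \<le> x \<and> ereal x < x0}"
  defines "W \<equiv> wronskian \<phi>1 \<phi>1' \<phi>2 \<phi>2'"
  defines "\<Phi> \<equiv> (\<lambda>x. \<phi>2 T * \<phi>1 x - \<phi>1 T * \<phi>2 x)"
  assumes "ereal T < x0"
    and "\<And>x. x \<in> I \<Longrightarrow> (\<phi>1 has_real_derivative \<phi>1' x) (at x within I)"
    and "\<And>x. x \<in> I \<Longrightarrow> (\<phi>2 has_real_derivative \<phi>2' x) (at x within I)"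
    and "continuous_on I \<phi>1'" and "continuous_on I \<phi>2'"
    and "\<phi>2 \<in> o[approach x0](\<phi>1)"
    and "\<And>x. x \<in> I \<Longrightarrow> \<phi>1 x \<noteq> 0"
    and "\<And>x. x \<in> I \<Longrightarrow> \<phi>2 x \<noteq> 0"
    and "\<And>x. x \<in> I \<Longrightarrow> W x \<noteq> 0"
  shows "(\<Phi> \<sim>[approach x0] (\<lambda>x. \<phi>2 T * \<phi>1 x)) \<and>
     ((\<lambda>x. W x / (\<Phi> x)\<^sup>2) \<sim>[approach x0]
           (\<lambda>x. 1 / (\<phi>2 T)\<^sup>2 * deriv (\<lambda>t. \<phi>2 t / \<phi>1 t) x)) \<and>
     ((\<lambda>x. improper_integral (\<lambda>t. W t / (\<Phi> t)\<^sup>2) x x0) \<sim>[approach x0]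
           (\<lambda>x. - (1 / (\<phi>2 T)\<^sup>2) * (\<phi>2 x / \<phi>1 x))) \<and>
     (\<forall>x. T < x \<and> ereal x < x0 \<longrightarrow>
           improper_integral_converges_to (\<lambda>t. W t / (\<Phi> t)\<^sup>2) x x0
             (- (1 / \<phi>2 T) * (\<phi>2 x / \<Phi> x)))"
proof -
  interpret P: wronskian_pair x0 T I \<phi>1 \<phi>1' \<phi>2 \<phi>2'
    using assms(4-6,9-12) by unfold_locales (auto simp: I_def W_def)
  have defs: "W = P.W" "\<Phi> = P.\<Phi>"
    by (simp_all add: W_def \<Phi>_def P.W_def P.\<Phi>_def)
  show ?thesis
    unfolding defs
    by (intro conjI allI impI P.\<Phi>_asymp_equiv P.W_div_\<Phi>_asymp_equiv
        P.improper_integral_asymp_equiv P.improper_integral_converges) auto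
qed

end
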